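(* For every $\Delta\in(0,1)$, if $N\ge164k^2\ln(4R/\Delta)+\frac{100\ln(2/\Delta)}{1-\tau}$, then with probability at least $1-\Delta$, $1-\widehat\tau\ge\frac{1-\tau}{8}$.
   Context: Let $R\ge 2$ be an integer and $\rho=(\rho_1,\dots,\rho_R)$ a probability vector with $\rho_r>0$ for all $r$. Let $Y_1,\dots,Y_N$ be i.i.d. labels with $\mathbb P(Y_j=r)=\rho_r$, $N_r=|\{j:Y_j=r\}|$, $\widehat\rho_r=N_r/N$. Fix an integer $k\ge1$. Set $\tau:=1-\sum_{r}\rho_r(1-\rho_r)^k$ and $\widehat\tau:=1-\sum_r\widehat\rho_r(1-\widehat\rho_r)^k$. *)

theory Defs
  imports "HOL-Probability.Probability"
begin

text \<open>Labels take values in {1..R}; their common law is the pmf p, so rho r = pmf p r.\<close>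

definition tau :: "nat pmf \<Rightarrow> nat \<Rightarrow> nat \<Rightarrow> real" where
  "tau p R k = 1 - (\<Sum>r\<in>{1..R}. pmf p r * (1 - pmf p r) ^ k)"

definition rho_hat :: "nat \<Rightarrow> (nat \<Rightarrow> nat) \<Rightarrow> nat \<Rightarrow> real" where
  "rho_hat N Y r = real (card {j \<in> {..<N}. Y j = r}) / real N"

definition tau_hat :: "nat \<Rightarrow> nat \<Rightarrow> nat \<Rightarrow> (nat \<Rightarrow> nat) \<Rightarrow> real" where
  "tau_hat N R k Y = 1 - (\<Sum>r\<in>{1..R}. rho_hat N Y r * (1 - rho_hat N Y r) ^ k)"

end

theory Submission
  imports Defs
begin

text \<open>Call a label light if \<open>\<rho>\<^sub>r \<le> 1/2\<close>. At most one label is heavy, and the light labels carry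
  at least a third of \<open>1 - \<tau> = \<Sum>\<^sub>r \<rho>\<^sub>r (1 - \<rho>\<^sub>r)^k\<close>. Chernoff bounds for the i.i.d. sample show that,
  with \<open>t = sqrt (2 ln (4R/\<Delta>) / N)\<close>, outside an event of probability at most \<open>\<Delta>/2\<close> every light label
  has \<open>rho_hat r \<le> \<rho>\<^sub>r + t\<close> and the empirical light weight \<open>\<Sum>\<^sub>r rho_hat r (1 - \<rho>\<^sub>r)^k\<close> is at least
  half its mean. On that event Bernoulli's inequality gives
  \<open>(1 - rho_hat r)^k \<ge> (1 - 2kt) (1 - \<rho>\<^sub>r)^k \<ge> 3/4 (1 - \<rho>\<^sub>r)^k\<close>, hence
  \<open>1 - tau_hat \<ge> 3/4 \<cdot> 1/2 \<cdot> (1 - \<tau>)/3 = (1 - \<tau>)/8\<close>.\<close>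

lemma integrable_measure_pmf_bounded:
  fixes f :: "'a \<Rightarrow> real"
  assumes "\<And>x. \<bar>f x\<bar> \<le> B"
  shows "integrable (measure_pmf p) f"
  by (rule measure_pmf.integrable_const_bound[where B = B]) (use assms in auto)

lemma exp_mult_le_chord:
  fixes l x :: real
  assumes "0 \<le> x" "x \<le> 1"
  shows "exp (l * x) \<le> 1 + x * (exp l - 1)"
proof -
  have "exp ((1 - x) *\<^sub>R 0 + x *\<^sub>R l) \<le> (1 - x) * exp 0 + x * exp l"
    by (rule convex_onD[OF exp_convex]) (use assms in auto)
  thus ?thesis by (simp add: algebra_simps)
qed

lemma mult_le_abs_mult_bound:
  fixes l x c :: real
  assumes "0 \<le> x" "x \<le> c"
  shows "l * x \<le> \<bar>l\<bar> * c"
proof -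
  have "l * x \<le> \<bar>l\<bar> * x" using assms by (intro mult_right_mono) auto
  also have "\<dots> \<le> \<bar>l\<bar> * c" using assms by (intro mult_left_mono) auto
  finally show ?thesis .
qed

lemma expectation_exp_mult_le:
  fixes g :: "'a \<Rightarrow> real"
  assumes g01: "\<And>x. 0 \<le> g x \<and> g x \<le> 1"
  shows "measure_pmf.expectation p (\<lambda>x. exp (l * g x))
           \<le> exp (measure_pmf.expectation p g * (exp l - 1))"
proof -
  have int_g: "integrable p g"
    by (rule integrable_measure_pmf_bounded[where B = 1]) (use g01 in auto)
  have int_exp: "integrable p (\<lambda>x. exp (l * g x))"
    by (rule integrable_measure_pmf_bounded[where B = "exp \<bar>l\<bar>"])
       (use g01 mult_le_abs_mult_bound[where c = 1] in fastforce)
  have "measure_pmf.expectation p (\<lambda>x. exp (l * g x))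
          \<le> measure_pmf.expectation p (\<lambda>x. 1 + g x * (exp l - 1))"
    by (intro integral_mono int_exp exp_mult_le_chord) (use g01 int_g in auto)
  also have "\<dots> = 1 + measure_pmf.expectation p g * (exp l - 1)"
    using int_g by simp
  also have "\<dots> \<le> exp (measure_pmf.expectation p g * (exp l - 1))"
    by (rule exp_ge_add_one_self)
  finally show ?thesis .
qed

lemma expectation_exp_sum_Pi_pmf_le:
  fixes g :: "'a \<Rightarrow> real" and I :: "'b set"
  assumes "finite I" and g01: "\<And>x. 0 \<le> g x \<and> g x \<le> 1"
  shows "measure_pmf.expectation (Pi_pmf I d (\<lambda>_. p)) (\<lambda>Y. exp (l * (\<Sum>i\<in>I. g (Y i))))
           \<le> exp (card I * measure_pmf.expectation p g * (exp l - 1))"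
proof -
  have int_exp: "integrable p (\<lambda>x. exp (l * g x))"
    by (rule integrable_measure_pmf_bounded[where B = "exp \<bar>l\<bar>"])
       (use g01 mult_le_abs_mult_bound[where c = 1] in fastforce)
  have "measure_pmf.expectation (Pi_pmf I d (\<lambda>_. p)) (\<lambda>Y. exp (l * (\<Sum>i\<in>I. g (Y i))))
      = measure_pmf.expectation (Pi_pmf I d (\<lambda>_. p)) (\<lambda>Y. \<Prod>i\<in>I. exp (l * g (Y i)))"
    by (simp add: sum_distrib_left exp_sum \<open>finite I\<close>)
  also have "\<dots> = (\<Prod>i\<in>I. measure_pmf.expectation p (\<lambda>x. exp (l * g x)))"
    by (rule expectation_prod_Pi_pmf) (use \<open>finite I\<close> int_exp in auto)
  also have "\<dots> \<le> (\<Prod>i\<in>I. exp (measure_pmf.expectation p g * (exp l - 1)))"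
    by (intro prod_mono conjI expectation_exp_mult_le g01) simp
  also have "\<dots> = exp (card I * measure_pmf.expectation p g * (exp l - 1))"
    by (simp add: exp_of_nat_mult[symmetric] mult.assoc)
  finally show ?thesis .
qed

text \<open>For \<open>l < 0\<close> this is a lower-tail bound.\<close>
lemma prob_Pi_pmf_sum_tail_le:
  fixes g :: "'a \<Rightarrow> real" and I :: "'b set"
  assumes "finite I" and g01: "\<And>x. 0 \<le> g x \<and> g x \<le> 1"
  shows "measure_pmf.prob (Pi_pmf I d (\<lambda>_. p)) {Y. l * s \<le> l * (\<Sum>i\<in>I. g (Y i))}
           \<le> exp (card I * measure_pmf.expectation p g * (exp l - 1) - l * s)"
proof -
  let ?M = "Pi_pmf I d (\<lambda>_. p)"
  have "0 \<le> (\<Sum>i\<in>I. g (Y i)) \<and> (\<Sum>i\<in>I. g (Y i)) \<le> card I" for Y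
    using g01 sum_mono[of I "\<lambda>i. g (Y i)" "\<lambda>_. 1"] by (auto intro: sum_nonneg)
  hence int: "integrable ?M (\<lambda>Y. exp (l * (\<Sum>i\<in>I. g (Y i))))"
    by (intro integrable_measure_pmf_bounded[where B = "exp (\<bar>l\<bar> * card I)"])
       (auto intro: mult_le_abs_mult_bound)
  have "measure_pmf.prob ?M {Y. l * s \<le> l * (\<Sum>i\<in>I. g (Y i))}
      = measure_pmf.prob ?M {Y \<in> space ?M. exp (l * s) \<le> exp (l * (\<Sum>i\<in>I. g (Y i)))}"
    by simp
  also have "\<dots> \<le> measure_pmf.expectation ?M (\<lambda>Y. exp (l * (\<Sum>i\<in>I. g (Y i)))) / exp (l * s)"
    by (rule integral_Markov_inequality_measure) (use int in auto)
  also have "\<dots> \<le> exp (card I * measure_pmf.expectation p g * (exp l - 1)) / exp (l * s)"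
    by (intro divide_right_mono expectation_exp_sum_Pi_pmf_le assms) auto
  also have "\<dots> = exp (card I * measure_pmf.expectation p g * (exp l - 1) - l * s)"
    by (simp add: exp_diff)
  finally show ?thesis .
qed

lemma sum_indicator_eq_rho_hat:
  "(\<Sum>j<N. of_bool (Y j = r)) = real N * rho_hat N Y r"
  by (simp add: rho_hat_def Int_def conj_commute)

lemma sum_weight_eq_rho_hat:
  assumes "finite G"
  shows "(\<Sum>j<N. if Y j \<in> G then c (Y j) else 0) = real N * (\<Sum>r\<in>G. rho_hat N Y r * c r)"
proof -
  have "(\<Sum>j<N. if Y j \<in> G then c (Y j) else 0) = (\<Sum>j<N. \<Sum>r\<in>G. of_bool (Y j = r) * c r)"
    using assms by (intro sum.cong) auto
  also have "\<dots> = (\<Sum>r\<in>G. (\<Sum>j<N. of_bool (Y j = r)) * c r)"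
    by (subst sum.swap) (simp add: sum_distrib_right)
  finally show ?thesis
    by (simp add: sum_indicator_eq_rho_hat sum_distrib_left mult.assoc)
qed

lemma rho_hat_nonneg: "0 \<le> rho_hat N Y r"
  by (simp add: rho_hat_def)

lemma rho_hat_le_one: "rho_hat N Y r \<le> 1"
proof -
  have "card {j \<in> {..<N}. Y j = r} \<le> N"
    using card_mono[of "{..<N}" "{j \<in> {..<N}. Y j = r}"] by auto
  thus ?thesis by (auto simp: rho_hat_def divide_le_eq_1)
qed

lemma prob_rho_hat_ge_le:
  assumes "0 < t" "t \<le> 1" "0 < N"
  shows "measure_pmf.prob (Pi_pmf {..<N} d (\<lambda>_. p)) {Y. pmf p r + t \<le> rho_hat N Y r}
           \<le> exp (- (N * t\<^sup>2 * (1 - pmf p r)))"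
proof -
  let ?ind = "\<lambda>y. of_bool (y = r) :: real"
  have E: "measure_pmf.expectation p ?ind = pmf p r"
    by (subst integral_measure_pmf_real[where A = "{r}"]) auto
  have "{Y. pmf p r + t \<le> rho_hat N Y r} = {Y. t * (N * (pmf p r + t)) \<le> t * (\<Sum>j<N. ?ind (Y j))}"
    using assms by (simp add: sum_indicator_eq_rho_hat)
  hence "measure_pmf.prob (Pi_pmf {..<N} d (\<lambda>_. p)) {Y. pmf p r + t \<le> rho_hat N Y r}
           \<le> exp (N * pmf p r * (exp t - 1) - t * (N * (pmf p r + t)))"
    using prob_Pi_pmf_sum_tail_le[of "{..<N}" ?ind d p t "N * (pmf p r + t)"] by (simp add: E)
  also have "\<dots> \<le> exp (N * pmf p r * (t + t\<^sup>2) - t * (N * (pmf p r + t)))"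
    using exp_bound[of t] assms by (simp add: mult_left_mono)
  also have "\<dots> = exp (- (N * t\<^sup>2 * (1 - pmf p r)))"
    by (simp add: algebra_simps power2_eq_square)
  finally show ?thesis .
qed

lemma prob_rho_hat_ge_Union_le:
  assumes "finite G" "\<And>r. r \<in> G \<Longrightarrow> pmf p r \<le> 1/2" "0 < t" "t \<le> 1" "0 < N"
  shows "measure_pmf.prob (Pi_pmf {..<N} d (\<lambda>_. p)) (\<Union>r\<in>G. {Y. pmf p r + t \<le> rho_hat N Y r})
           \<le> card G * exp (- (N * t\<^sup>2 / 2))"
proof -
  let ?M = "Pi_pmf {..<N} d (\<lambda>_. p)"
  have "measure_pmf.prob ?M (\<Union>r\<in>G. {Y. pmf p r + t \<le> rho_hat N Y r})
          \<le> (\<Sum>r\<in>G. measure_pmf.prob ?M {Y. pmf p r + t \<le> rho_hat N Y r})"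
    by (rule measure_pmf.finite_measure_subadditive_finite) (use assms in auto)
  also have "\<dots> \<le> (\<Sum>r\<in>G. exp (- (N * t\<^sup>2 / 2)))"
  proof (intro sum_mono order.trans[OF prob_rho_hat_ge_le])
    fix r assume "r \<in> G"
    have "N * t\<^sup>2 * (1/2) \<le> N * t\<^sup>2 * (1 - pmf p r)"
      using assms(2)[OF \<open>r \<in> G\<close>] by (intro mult_left_mono) auto
    thus "exp (- (N * t\<^sup>2 * (1 - pmf p r))) \<le> exp (- (N * t\<^sup>2 / 2))" by simp
  qed (use assms in auto)
  finally show ?thesis by simp
qed

lemma exp_minus_one_le: "exp (- 1 :: real) \<le> 3 / 8"
proof -
  have "8 / 3 \<le> exp (1 :: real)"
    using e_approx_32 by (simp add: abs_if split: if_splits)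
  thus ?thesis by (simp add: exp_minus divide_simps)
qed

lemma prob_rho_hat_weighted_le_half:
  fixes p :: "nat pmf"
  assumes "finite G" and c01: "\<And>r. r \<in> G \<Longrightarrow> 0 \<le> c r \<and> c r \<le> 1" and "0 < N"
  defines "\<mu> \<equiv> \<Sum>r\<in>G. pmf p r * c r"
  shows "measure_pmf.prob (Pi_pmf {..<N} d (\<lambda>_. p)) {Y. (\<Sum>r\<in>G. rho_hat N Y r * c r) \<le> \<mu> / 2}
           \<le> exp (- (N * \<mu> / 8))"
proof -
  define w where "w y = (if y \<in> G then c y else 0)" for y
  have w01: "0 \<le> w y \<and> w y \<le> 1" for y
    using c01 by (simp add: w_def)
  have E: "measure_pmf.expectation p w = \<mu>"
    unfolding \<mu>_def using \<open>finite G\<close>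
    by (subst integral_measure_pmf_real[where A = G]) (auto simp: w_def mult.commute split: if_splits)
  have "\<mu> \<ge> 0"
    unfolding \<mu>_def using c01 by (intro sum_nonneg) auto
  have "{Y. (\<Sum>r\<in>G. rho_hat N Y r * c r) \<le> \<mu> / 2} = {Y. (- 1) * (N * \<mu> / 2) \<le> (- 1) * (\<Sum>j<N. w (Y j))}"
    using assms unfolding w_def by (simp add: sum_weight_eq_rho_hat)
  hence "measure_pmf.prob (Pi_pmf {..<N} d (\<lambda>_. p)) {Y. (\<Sum>r\<in>G. rho_hat N Y r * c r) \<le> \<mu> / 2}
           \<le> exp (N * \<mu> * (exp (- 1) - 1) + N * \<mu> / 2)"
    using prob_Pi_pmf_sum_tail_le[of "{..<N}" w d p "- 1" "N * \<mu> / 2"] w01 by (simp add: E)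
  also have "\<dots> \<le> exp (- (N * \<mu> / 8))"
  proof -
    have "N * \<mu> * (exp (- 1) - 1) \<le> N * \<mu> * (3 / 8 - 1)"
      using exp_minus_one_le \<open>\<mu> \<ge> 0\<close> by (intro mult_left_mono) auto
    thus ?thesis by simp
  qed
  finally show ?thesis .
qed

lemma power_le_twice_mult_power_one_minus:
  fixes e :: real
  assumes "0 \<le> e" "e \<le> 1 / 2" "k \<ge> 1"
  shows "e ^ k \<le> 2 * e * (1 - e) ^ k"
proof -
  obtain j where k: "k = Suc j" using assms(3) by (cases k) auto
  have "e ^ k = e * e ^ j" by (simp add: k)
  also have "\<dots> \<le> e * (1 - e) ^ j"
    using assms by (intro mult_left_mono power_mono) auto
  also have "\<dots> = e * (1 - e) ^ j * 1" by simp
  also have "\<dots> \<le> e * (1 - e) ^ j * (2 * (1 - e))"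
    using assms by (intro mult_left_mono) auto
  also have "\<dots> = 2 * e * (1 - e) ^ k" by (simp add: k)
  finally show ?thesis .
qed

text \<open>At most one label m is heavy (\<open>\<rho> m > 1/2\<close>). With \<open>e = 1 - \<rho> m\<close>, the light labels
  contribute at least \<open>e (1 - e) ^ k\<close> and the heavy one at most \<open>e ^ k \<le> 2 e (1 - e) ^ k\<close>.\<close>
lemma sum_mass_power_le_three_light:
  fixes \<rho> :: "'a \<Rightarrow> real"
  assumes "finite I" and nonneg: "\<And>r. r \<in> I \<Longrightarrow> 0 \<le> \<rho> r" and sum1: "(\<Sum>r\<in>I. \<rho> r) = 1"
    and "k \<ge> 1"
  shows "(\<Sum>r\<in>I. \<rho> r * (1 - \<rho> r) ^ k) \<le> 3 * (\<Sum>r\<in>{r\<in>I. \<rho> r \<le> 1/2}. \<rho> r * (1 - \<rho> r) ^ k)"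
proof (cases "\<forall>r\<in>I. \<rho> r \<le> 1/2")
  case True
  have "0 \<le> (\<Sum>r\<in>I. \<rho> r * (1 - \<rho> r) ^ k)"
    using True nonneg by (intro sum_nonneg) auto
  moreover have "{r\<in>I. \<rho> r \<le> 1/2} = I" using True by auto
  ultimately show ?thesis by simp
next
  case False
  then obtain m where m: "m \<in> I" "\<rho> m > 1/2" by auto
  define e where "e = 1 - \<rho> m"
  define light where "light = (\<Sum>r\<in>I - {m}. \<rho> r * (1 - \<rho> r) ^ k)"
  have mass_light: "(\<Sum>r\<in>I - {m}. \<rho> r) = e"
    using sum.remove[OF \<open>finite I\<close> m(1), of \<rho>] sum1 by (simp add: e_def)
  have small: "\<rho> r \<le> e" if "r \<in> I - {m}" for r
    using member_le_sum[of r "I - {m}" \<rho>] that nonneg \<open>finite I\<close> mass_light by auto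
  have "0 \<le> (\<Sum>r\<in>I - {m}. \<rho> r)" using nonneg by (intro sum_nonneg) auto
  hence e: "0 \<le> e" "e < 1/2"
    using m mass_light by (auto simp: e_def)
  have light_set: "{r\<in>I. \<rho> r \<le> 1/2} = I - {m}"
    using small e m by force
  have "e * (1 - e) ^ k = (\<Sum>r\<in>I - {m}. \<rho> r * (1 - e) ^ k)"
    by (simp add: mass_light sum_distrib_right[symmetric])
  also have "\<dots> \<le> light"
    unfolding light_def using small nonneg e by (intro sum_mono mult_left_mono power_mono) auto
  finally have "e * (1 - e) ^ k \<le> light" .
  moreover have "\<rho> m * e ^ k \<le> e ^ k"
    using m e by (intro mult_left_le_one_le) (auto simp: e_def)
  moreover have "e ^ k \<le> 2 * e * (1 - e) ^ k"
    using e \<open>k \<ge> 1\<close> by (intro power_le_twice_mult_power_one_minus) auto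
  moreover have "(\<Sum>r\<in>I. \<rho> r * (1 - \<rho> r) ^ k) = \<rho> m * e ^ k + light"
    unfolding light_def e_def using sum.remove[OF \<open>finite I\<close> m(1)] by simp
  ultimately show ?thesis
    unfolding light_set light_def by linarith
qed

lemma power_one_minus_shift_ge:
  fixes \<rho> t :: real
  assumes "0 \<le> \<rho>" "\<rho> \<le> 1/2" "0 \<le> t" "t \<le> 1/2" "2 * k * t \<le> 1"
  shows "(1 - \<rho>) ^ k * (1 - 2 * k * t) \<le> (1 - \<rho> - t) ^ k"
proof -
  define d where "d = 1 - \<rho>"
  have d: "1/2 \<le> d" "d \<le> 1" using assms by (auto simp: d_def)
  have "t * 1 \<le> t * (2 * d)" using d assms by (intro mult_left_mono) auto
  hence "t / d \<le> 2 * t" using d by (simp add: divide_simps)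
  hence "real k * (t / d) \<le> real k * (2 * t)" by (intro mult_left_mono) auto
  hence "1 - 2 * k * t \<le> 1 + k * (- (t / d))" by simp
  also have "\<dots> \<le> (1 - t / d) ^ k"
    using Bernoulli_inequality[of "- (t / d)" k] \<open>t / d \<le> 2 * t\<close> assms by simp
  finally have "d ^ k * (1 - 2 * k * t) \<le> d ^ k * (1 - t / d) ^ k"
    using d by (intro mult_left_mono) auto
  also have "\<dots> = (d - t) ^ k"
    using d by (simp add: power_mult_distrib[symmetric] algebra_simps)
  finally show ?thesis by (simp add: d_def)
qed

lemma one_minus_tau_hat_ge:
  fixes \<rho> :: "nat \<Rightarrow> real"
  assumes "G \<subseteq> {1..R}" "0 \<le> t" "t \<le> 1/2" "2 * real k * t \<le> 1"
    and light: "\<And>r. r \<in> G \<Longrightarrow> 0 \<le> \<rho> r \<and> \<rho> r \<le> 1/2"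
    and close: "\<And>r. r \<in> G \<Longrightarrow> rho_hat N Y r \<le> \<rho> r + t"
  shows "(1 - 2 * real k * t) * (\<Sum>r\<in>G. rho_hat N Y r * (1 - \<rho> r) ^ k) \<le> 1 - tau_hat N R k Y"
proof -
  have "(1 - 2 * real k * t) * (\<Sum>r\<in>G. rho_hat N Y r * (1 - \<rho> r) ^ k)
      = (\<Sum>r\<in>G. rho_hat N Y r * ((1 - \<rho> r) ^ k * (1 - 2 * real k * t)))"
    by (simp add: sum_distrib_left mult_ac)
  also have "\<dots> \<le> (\<Sum>r\<in>G. rho_hat N Y r * (1 - rho_hat N Y r) ^ k)"
  proof (intro sum_mono mult_left_mono rho_hat_nonneg)
    fix r assume "r \<in> G"
    have "(1 - \<rho> r) ^ k * (1 - 2 * real k * t) \<le> (1 - \<rho> r - t) ^ k"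
      using light[OF \<open>r \<in> G\<close>] assms by (intro power_one_minus_shift_ge) auto
    also have "\<dots> \<le> (1 - rho_hat N Y r) ^ k"
      using light[OF \<open>r \<in> G\<close>] close[OF \<open>r \<in> G\<close>] assms by (intro power_mono) auto
    finally show "(1 - \<rho> r) ^ k * (1 - 2 * real k * t) \<le> (1 - rho_hat N Y r) ^ k" .
  qed
  also have "\<dots> \<le> (\<Sum>r\<in>{1..R}. rho_hat N Y r * (1 - rho_hat N Y r) ^ k)"
    using assms(1) rho_hat_nonneg rho_hat_le_one by (intro sum_mono2) auto
  also have "\<dots> = 1 - tau_hat N R k Y"
    by (simp add: tau_hat_def)
  finally show ?thesis .
qed

lemma tau_less_one:
  assumes "R \<ge> 2" "set_pmf p \<subseteq> {1..R}" "\<forall>r\<in>{1..R}. pmf p r > 0"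
  shows "tau p R k < 1"
proof -
  have "pmf p 1 + pmf p 2 = (\<Sum>r\<in>{1, 2}. pmf p r)" by simp
  also have "\<dots> \<le> (\<Sum>r\<in>{1..R}. pmf p r)"
    using assms(1) by (intro sum_mono2) auto
  also have "\<dots> = 1"
    by (rule sum_pmf_eq_1) (use assms(2) in auto)
  moreover have "0 < pmf p 2" using assms(1,3) by auto
  ultimately have "pmf p 1 < 1" by linarith
  hence "0 < pmf p 1 * (1 - pmf p 1) ^ k"
    using assms(1,3) by simp
  also have "\<dots> \<le> (\<Sum>r\<in>{1..R}. pmf p r * (1 - pmf p r) ^ k)"
    using assms(1) by (intro member_le_sum) (auto simp: pmf_le_1)
  finally show ?thesis
    by (simp add: tau_def)
qed

lemma mult_sqrt_le_one_eighth:
  fixes L :: real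
  assumes "0 \<le> L" "0 < N" "128 * k\<^sup>2 * L \<le> N"
  shows "k * sqrt (2 * L / N) \<le> 1/8"
proof (rule power2_le_imp_le)
  have "(k * sqrt (2 * L / N))\<^sup>2 = k\<^sup>2 * (2 * L) / N"
    using assms by (simp add: power_mult_distrib)
  also have "\<dots> \<le> (1/8)\<^sup>2"
    using assms by (simp add: divide_le_eq power2_eq_square)
  finally show "(k * sqrt (2 * L / N))\<^sup>2 \<le> (1/8)\<^sup>2" .
qed simp

lemma prob_one_minus_tau_hat_small_le:
  assumes "set_pmf p \<subseteq> {1..R}" "k \<ge> 1" "0 < t" "k * t \<le> 1/8" "0 < N"
  shows "measure_pmf.prob (Pi_pmf {..<N} d (\<lambda>_. p)) {Y. 1 - tau_hat N R k Y < (1 - tau p R k) / 8}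
           \<le> R * exp (- (N * t\<^sup>2 / 2)) + exp (- (N * (1 - tau p R k) / 24))"
proof -
  let ?M = "Pi_pmf {..<N} d (\<lambda>_. p)"
  define G where "G = {r\<in>{1..R}. pmf p r \<le> 1/2}"
  define c where "c r = (1 - pmf p r) ^ k" for r
  define \<mu> where "\<mu> = (\<Sum>r\<in>G. pmf p r * c r)"
  define Over where "Over = (\<Union>r\<in>G. {Y. pmf p r + t \<le> rho_hat N Y r})"
  define Under where "Under = {Y. (\<Sum>r\<in>G. rho_hat N Y r * c r) \<le> \<mu> / 2}"
  have "G \<subseteq> {1..R}" "finite G"
    by (auto simp: G_def intro: finite_subset)
  have "0 \<le> \<mu>"
    unfolding \<mu>_def c_def by (intro sum_nonneg) (simp add: pmf_le_1)
  have "t \<le> k * t"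
    using assms(2,3) by simp
  hence "t \<le> 1/8"
    using assms(4) by linarith
  have "1 - tau p R k \<le> 3 * \<mu>"
  proof -
    have "(\<Sum>r\<in>{1..R}. pmf p r) = 1" by (rule sum_pmf_eq_1) (use assms(1) in auto)
    thus ?thesis
      using sum_mass_power_le_three_light[of "{1..R}" "pmf p" k] assms(2)
      by (simp add: tau_def \<mu>_def c_def G_def)
  qed
  have "{Y. 1 - tau_hat N R k Y < (1 - tau p R k) / 8} \<subseteq> Over \<union> Under"
  proof (rule subsetI, rule ccontr)
    fix Y assume Y: "Y \<in> {Y. 1 - tau_hat N R k Y < (1 - tau p R k) / 8}" "Y \<notin> Over \<union> Under"
    have "(1 - tau p R k) / 8 \<le> (3/4) * (\<mu> / 2)"
      using \<open>1 - tau p R k \<le> 3 * \<mu>\<close> by simp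
    also have "\<dots> \<le> (1 - 2 * real k * t) * (\<Sum>r\<in>G. rho_hat N Y r * c r)"
      using Y(2) assms(4) \<open>0 \<le> \<mu>\<close> unfolding Under_def by (intro mult_mono) auto
    also have "\<dots> \<le> 1 - tau_hat N R k Y"
      unfolding c_def
      by (rule one_minus_tau_hat_ge[where \<rho> = "pmf p"])
         (use Y(2) \<open>G \<subseteq> {1..R}\<close> assms(3,4) \<open>t \<le> 1/8\<close> in \<open>auto simp: Over_def G_def\<close>)
    finally show False using Y(1) by simp
  qed
  hence "measure_pmf.prob ?M {Y. 1 - tau_hat N R k Y < (1 - tau p R k) / 8}
           \<le> measure_pmf.prob ?M (Over \<union> Under)"
    by (intro measure_pmf.finite_measure_mono) auto
  also have "\<dots> \<le> measure_pmf.prob ?M Over + measure_pmf.prob ?M Under"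
    by (rule measure_Un_le) auto
  also have "measure_pmf.prob ?M Over \<le> card G * exp (- (N * t\<^sup>2 / 2))"
    unfolding Over_def
    by (rule prob_rho_hat_ge_Union_le) (use \<open>finite G\<close> \<open>t \<le> 1/8\<close> assms in \<open>auto simp: G_def\<close>)
  also have "\<dots> \<le> R * exp (- (N * t\<^sup>2 / 2))"
    using card_mono[OF _ \<open>G \<subseteq> {1..R}\<close>] by (intro mult_right_mono) auto
  also have "measure_pmf.prob ?M Under \<le> exp (- (N * \<mu> / 8))"
    unfolding Under_def \<mu>_def
    by (rule prob_rho_hat_weighted_le_half) (use \<open>finite G\<close> assms(5) in \<open>auto simp: c_def pmf_le_1 power_le_one\<close>)
  also have "\<dots> \<le> exp (- (N * (1 - tau p R k) / 24))"
  proof -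
    have "N * (1 - tau p R k) \<le> N * (3 * \<mu>)"
      using \<open>1 - tau p R k \<le> 3 * \<mu>\<close> by (intro mult_left_mono) auto
    thus ?thesis by simp
  qed
  finally show ?thesis by simp
qed

lemma exp_minus_div_24_le_quarter:
  fixes \<Delta> x :: real
  assumes "0 < \<Delta>" "\<Delta> < 1" "100 * ln (2 / \<Delta>) \<le> x"
  shows "exp (- (x / 24)) \<le> \<Delta> / 4"
proof -
  have "0 < ln (2 / \<Delta>)"
    using assms by (simp add: field_simps)
  have "ln (4 / \<Delta>) = ln 2 + ln (2 / \<Delta>)"
    using assms ln_mult[of 2 "2 / \<Delta>"] by simp
  also have "ln 2 \<le> ln (2 / \<Delta>)"
    using assms by (simp add: field_simps)
  finally have "ln (4 / \<Delta>) \<le> x / 24"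
    using assms(3) \<open>0 < ln (2 / \<Delta>)\<close> by linarith
  hence "- (x / 24) \<le> ln (\<Delta> / 4)"
    using assms(1) by (simp add: ln_div)
  thus ?thesis
    using assms(1) by (simp add: ln_ge_iff)
qed

theorem mainTheorem5:
  fixes p :: "nat pmf" and R k N :: nat and \<Delta> :: real
  assumes "R \<ge> 2"
    and "set_pmf p \<subseteq> {1..R}"
    and "\<forall>r\<in>{1..R}. pmf p r > 0"
    and "k \<ge> 1"
    and "0 < \<Delta>" and "\<Delta> < 1"
    and "real N \<ge> 164 * real k ^ 2 * ln (4 * real R / \<Delta>) + 100 * ln (2 / \<Delta>) / (1 - tau p R k)"
  shows "measure_pmf.prob (Pi_pmf {..<N} 0 (\<lambda>_. p))
           {Y. 1 - tau_hat N R k Y \<ge> (1 - tau p R k) / 8} \<ge> 1 - \<Delta>"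
proof -
  let ?M = "Pi_pmf {..<N} 0 (\<lambda>_. p)"
  define a where "a = 1 - tau p R k"
  define L where "L = ln (4 * R / \<Delta>)"
  define t where "t = sqrt (2 * L / N)"
  have "0 < a" "0 < L" "0 < ln (2 / \<Delta>)"
    using tau_less_one[OF assms(1-3)] assms(1,5,6) by (auto simp: a_def L_def field_simps)
  moreover have "real N \<ge> 164 * k\<^sup>2 * L + 100 * ln (2 / \<Delta>) / a"
    using assms(7) by (simp add: a_def L_def)
  moreover have "0 < 100 * ln (2 / \<Delta>) / a" "0 \<le> k\<^sup>2 * L"
    using \<open>0 < a\<close> \<open>0 < L\<close> \<open>0 < ln (2 / \<Delta>)\<close> by auto
  ultimately have "0 < real N" "128 * k\<^sup>2 * L \<le> N" "100 * ln (2 / \<Delta>) / a \<le> N"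
    by linarith+
  hence "0 < N" "0 < t" "k * t \<le> 1/8" "N * t\<^sup>2 = 2 * L" "100 * ln (2 / \<Delta>) \<le> N * a"
    using \<open>0 < L\<close> \<open>0 < a\<close> mult_sqrt_le_one_eighth[of L N k] by (auto simp: t_def pos_divide_le_eq)
  have "R * exp (- (N * t\<^sup>2 / 2)) = \<Delta> / 4"
    using \<open>N * t\<^sup>2 = 2 * L\<close> assms(1,5) by (simp add: L_def exp_minus)
  moreover have "exp (- (N * a / 24)) \<le> \<Delta> / 4"
    using exp_minus_div_24_le_quarter[OF assms(5,6) \<open>100 * ln (2 / \<Delta>) \<le> N * a\<close>] .
  ultimately have "measure_pmf.prob ?M {Y. 1 - tau_hat N R k Y < a / 8} \<le> \<Delta> / 2"
    using prob_one_minus_tau_hat_small_le[OF assms(2,4) \<open>0 < t\<close> \<open>k * t \<le> 1/8\<close> \<open>0 < N\<close>, of 0]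
    by (simp add: a_def)
  moreover have "{Y. a / 8 \<le> 1 - tau_hat N R k Y} = space ?M - {Y. 1 - tau_hat N R k Y < a / 8}"
    by auto
  ultimately show ?thesis
    using measure_pmf.prob_compl[of "{Y. 1 - tau_hat N R k Y < a / 8}" ?M] assms(5) by (simp add: a_def)
qed

end
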